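(* Let $\gamma=[0;1,1,c_3,1,c_5,1,c_7,1,\dots]$, i.e. $\gamma$ has infinite continued fraction expansion $[c_0;c_1,c_2,\dots]$ with $c_0=0$, $c_n=1$ for $n$ even $\ge2$ and for $n=1$, and $c_{2n+1}\in\{1,2\}$ for all $n\in\mathbb{N}$. Let $p_n/q_n$ denote its convergents. For every $m\in\mathbb{N}$: (i) if $\lfloor m\gamma\rfloor/m$ is not a convergent of $\gamma$, then $\frac{2}{\pi}m\tan\left(\frac{\pi}{2}(m\gamma-\lfloor m\gamma\rfloor)\right)>1$; (ii) if $\lfloor m\gamma\rfloor=p_{2n}$ and $m=q_{2n}$ for some $n$, and $c_{2n+1}=1$, then $\frac{2}{\pi}m\tan\left(\frac{\pi}{2}(m\gamma-\lfloor m\gamma\rfloor)\right)>\frac{2}{5}$; (iii) if $\lfloor m\gamma\rfloor=p_{2n}$ and $m=q_{2n}$ for some $n$, and $c_{2n+1}=2$, then $\frac{2}{\pi}m\tan\left(\frac{\pi}{2}(m\gamma-\lfloor m\gamma\rfloor)\right)<\frac{4}{\pi}(2-\sqrt{3})$.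
   Context: $[c_0;c_1,c_2,\dots]$ denotes the continued fraction $c_0+\cfrac{1}{c_1+\cfrac{1}{c_2+\cdots}}$. The $n$-th convergent of $\gamma$ is $p_n/q_n=[c_0;c_1,\dots,c_n]$ written in lowest terms with $q_n>0$. $\mathbb{N}=\{1,2,\dots\}$. *)

theory Defs
  imports Complex_Main
begin

fun cf :: "(nat \<Rightarrow> nat) \<Rightarrow> nat \<Rightarrow> rat" where
  "cf c 0 = of_nat (c 0)"
| "cf c (Suc n) = of_nat (c 0) + 1 / cf (\<lambda>k. c (Suc k)) n"

definition conv_p :: "(nat \<Rightarrow> nat) \<Rightarrow> nat \<Rightarrow> int" where
  "conv_p c n = fst (quotient_of (cf c n))"
definition conv_q :: "(nat \<Rightarrow> nat) \<Rightarrow> nat \<Rightarrow> int" where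
  "conv_q c n = snd (quotient_of (cf c n))"

end

(* Write gamma = (alpha p_k + p_(k-1)) / (alpha q_k + q_(k-1)) with the complete quotient alpha,
   which lies in [1, 3], and in [15/11, 5/3] when the partial quotients following index k start
   with 1, c, 1.  For q_(k-1) <= m < q_k, unimodularity of the convergent matrix gives integer
   coordinates (floor (m gamma), m) = a (p_k, q_k) + b (p_(k-1), q_(k-1)), and then
   m gamma - floor (m gamma) = +-(b alpha - a) / (alpha q_k + q_(k-1)).  As 0 <= m < q_k, the
   coordinates a and b have opposite signs; this forces m (m gamma - floor (m gamma)) > 1 unless
   a = 0 or (a, b) = (1, -1), and in both exceptional cases floor (m gamma) / m is a convergent.
   At m = q_(2n) the same formula gives alpha q_(2n) / (alpha q_(2n+1) + q_(2n)), which the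
   recurrence for q_n bounds below by 2/5 if c_(2n+1) = 1 and above by 10/31 if c_(2n+1) = 2.
   Finally x <= tan x, and tan x <= x / (1 - x^2/2) for small x, transfer these bounds. *)

theory Submission
  imports "HOL-Analysis.Analysis" Defs
begin

section \<open>Convergents of a continued fraction\<close>

fun cf_real :: "(nat \<Rightarrow> nat) \<Rightarrow> nat \<Rightarrow> real" where
  "cf_real d 0 = real (d 0)"
| "cf_real d (Suc n) = real (d 0) + 1 / cf_real (\<lambda>k. d (Suc k)) n"

fun cf_last :: "(nat \<Rightarrow> nat) \<Rightarrow> nat \<Rightarrow> real \<Rightarrow> real" where
  "cf_last d 0 x = x"
| "cf_last d (Suc n) x = real (d 0) + 1 / cf_last (\<lambda>k. d (Suc k)) n x"

(* Shifted by two: cf_num c (n + 2) = p_n and cf_den c (n + 2) = q_n,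
   from the initial values p_(-2) = 0, p_(-1) = 1, q_(-2) = 1, q_(-1) = 0. *)
fun cf_num :: "(nat \<Rightarrow> nat) \<Rightarrow> nat \<Rightarrow> int" where
  "cf_num c 0 = 0"
| "cf_num c (Suc 0) = 1"
| "cf_num c (Suc (Suc n)) = int (c n) * cf_num c (Suc n) + cf_num c n"

fun cf_den :: "(nat \<Rightarrow> nat) \<Rightarrow> nat \<Rightarrow> int" where
  "cf_den c 0 = 1"
| "cf_den c (Suc 0) = 0"
| "cf_den c (Suc (Suc n)) = int (c n) * cf_den c (Suc n) + cf_den c n"

lemma of_rat_cf: "real_of_rat (cf c n) = cf_real c n"
  by (induction n arbitrary: c) (auto simp: of_rat_add of_rat_divide)

lemma cf_real_add: "cf_real c (j + n) = cf_last c j (cf_real (\<lambda>k. c (j + k)) n)"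
  by (induction j arbitrary: c) auto

lemma cf_real_eq_cf_last: "cf_real c n = cf_last c n (real (c n))"
  by (induction n arbitrary: c) auto

lemma cf_last_Suc_right: "cf_last c (Suc n) x = cf_last c n (real (c n) + 1 / x)"
  by (induction n arbitrary: c) auto

lemma cf_last_eq_num_den:
  assumes "x > 0"
  shows "cf_last c n x =
    (x * cf_num c (n + 1) + cf_num c n) / (x * cf_den c (n + 1) + cf_den c n)"
  using assms
proof (induction n arbitrary: x)
  case (Suc n)
  define y where "y = real (c n) + 1 / x"
  have "y > 0"
    using Suc.prems by (simp add: y_def add_nonneg_pos)
  have "cf_last c (Suc n) x = cf_last c n y"
    unfolding y_def by (rule cf_last_Suc_right)
  also have "\<dots> = (y * cf_num c (n + 1) + cf_num c n) / (y * cf_den c (n + 1) + cf_den c n)"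
    using Suc.IH[OF \<open>y > 0\<close>] .
  also have "\<dots> = (x * (y * cf_num c (n + 1) + cf_num c n)) / (x * (y * cf_den c (n + 1) + cf_den c n))"
    using Suc.prems by simp
  finally show ?case
    using Suc.prems by (simp add: y_def algebra_simps)
qed simp

lemma cf_num_den_det: "cf_num c (n + 1) * cf_den c n - cf_num c n * cf_den c (n + 1) = (-1) ^ n"
  by (induction n) (simp_all add: algebra_simps)

lemma cf_den_nonneg: "cf_den c n \<ge> 0"
  by (induction c n rule: cf_den.induct) auto

lemma cf_den_ge_1:
  assumes "\<And>k. k \<ge> 1 \<Longrightarrow> c k \<ge> 1" and "n \<ge> 2"
  shows "cf_den c n \<ge> 1"
proof -
  have "cf_den c (k + 2) \<ge> 1" for k
  proof (induction k)
    case (Suc k)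
    have "int (c (Suc k)) * cf_den c (k + 2) \<ge> 1 * 1"
      using Suc assms(1)[of "Suc k"] by (intro mult_mono) auto
    then show ?case
      using cf_den_nonneg[of c "Suc k"] by (simp add: numeral_eq_Suc)
  qed (simp add: numeral_eq_Suc)
  then show ?thesis
    using \<open>n \<ge> 2\<close> by (metis le_add_diff_inverse2)
qed

lemma cf_den_mono:
  assumes "\<And>k. k \<ge> 1 \<Longrightarrow> c k \<ge> 1" and "n \<ge> 1"
  shows "cf_den c n \<le> cf_den c (Suc n)"
proof -
  obtain k where n: "n = Suc k"
    using \<open>n \<ge> 1\<close> by (cases n) auto
  show ?thesis
  proof (cases k)
    case (Suc i)
    have "cf_den c (Suc k) \<le> int (c k) * cf_den c (Suc k)"
      using assms(1)[of k] Suc cf_den_nonneg[of c "Suc k"] by (simp add: mult_le_cancel_right1)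
    then show ?thesis
      using n cf_den_nonneg[of c k] by simp
  qed (simp add: n)
qed

lemma cf_den_ge:
  assumes "\<And>k. k \<ge> 1 \<Longrightarrow> c k \<ge> 1"
  shows "cf_den c (n + 2) \<ge> int n"
proof (induction n)
  case (Suc n)
  have "cf_den c (n + 3) = int (c (Suc n)) * cf_den c (n + 2) + cf_den c (n + 1)"
    by (simp add: numeral_eq_Suc)
  moreover have "cf_den c (n + 2) \<le> int (c (Suc n)) * cf_den c (n + 2)"
    using assms[of "Suc n"] cf_den_nonneg[of c "n + 2"] by (simp add: mult_le_cancel_right1)
  moreover have "cf_den c (n + 1) \<ge> 1 \<or> n = 0"
    using cf_den_ge_1[of c "n + 1", OF assms] by auto
  moreover have "cf_den c 3 \<ge> 1"
    using assms[of 1] by (simp add: numeral_eq_Suc)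
  ultimately show ?case
    using Suc by (auto simp: numeral_eq_Suc)
qed simp

lemma cf_real_eq_num_den:
  assumes "\<And>k. k \<ge> 1 \<Longrightarrow> c k \<ge> 1"
  shows "cf_real c n = cf_num c (n + 2) / cf_den c (n + 2)"
proof (cases n)
  case (Suc k)
  have "cf_real c n = cf_last c n (real (c n))"
    by (rule cf_real_eq_cf_last)
  also have "\<dots> = (real (c n) * cf_num c (n + 1) + cf_num c n) / (real (c n) * cf_den c (n + 1) + cf_den c n)"
    using assms[of n] Suc by (intro cf_last_eq_num_den) auto
  finally show ?thesis
    by (simp add: numeral_eq_Suc)
qed (simp add: numeral_eq_Suc)

lemma conv_p_conv_q:
  assumes pos: "\<And>k. k \<ge> 1 \<Longrightarrow> c k \<ge> 1"
  shows "conv_p c n = cf_num c (n + 2)" and "conv_q c n = cf_den c (n + 2)"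
proof -
  have "real_of_rat (cf c n) = real_of_rat (of_int (cf_num c (n + 2)) / of_int (cf_den c (n + 2)))"
    using cf_real_eq_num_den[of c, OF pos] unfolding of_rat_cf of_rat_divide of_rat_of_int_eq .
  then have cf: "cf c n = Fract (cf_num c (n + 2)) (cf_den c (n + 2))"
    by (simp add: Fract_of_int_quotient)
  have det: "cf_num c (n + 3) * cf_den c (n + 2) - cf_num c (n + 2) * cf_den c (n + 3) = (-1) ^ (n + 2)"
    using cf_num_den_det[of c "n + 2"] by (simp add: numeral_eq_Suc)
  have "coprime (cf_num c (n + 2)) (cf_den c (n + 2))"
  proof (rule coprimeI)
    fix d assume "d dvd cf_num c (n + 2)" "d dvd cf_den c (n + 2)"
    then have "d dvd (-1) ^ (n + 2)"
      unfolding det[symmetric] by simp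
    moreover have "is_unit ((-1 :: int) ^ (n + 2))"
      by simp
    ultimately show "is_unit d"
      using dvd_unit_imp_unit by blast
  qed
  moreover have "cf_den c (n + 2) > 0"
    using cf_den_ge_1[of c "n + 2", OF pos] by linarith
  ultimately show "conv_p c n = cf_num c (n + 2)" "conv_q c n = cf_den c (n + 2)"
    using cf by (simp_all add: conv_p_def conv_q_def quotient_of_Fract)
qed

lemma cf_num_rec: "cf_num c (n + 2) = int (c n) * cf_num c (n + 1) + cf_num c n"
  and cf_den_rec: "cf_den c (n + 2) = int (c n) * cf_den c (n + 1) + cf_den c n"
  by (simp_all add: numeral_eq_Suc)

declare cf_num.simps(3) [simp del] cf_den.simps(3) [simp del]

lemma cf_real_ge_1:
  assumes "\<And>k. d k \<ge> 1"
  shows "cf_real d n \<ge> 1"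
  using assms
proof (induction n arbitrary: d)
  case (Suc n)
  have "1 / cf_real (\<lambda>k. d (Suc k)) n > 0"
    using Suc.IH[of "\<lambda>k. d (Suc k)"] Suc.prems by simp
  moreover have "real (d 0) \<ge> 1"
    using Suc.prems[of 0] by simp
  ultimately show ?case
    by (simp only: cf_real.simps)
qed simp

lemma cf_real_le_3:
  assumes "\<And>k. 1 \<le> d k \<and> d k \<le> 2"
  shows "cf_real d n \<le> 3"
proof (cases n)
  case (Suc k)
  have "1 / cf_real (\<lambda>k. d (Suc k)) k \<le> 1"
    using cf_real_ge_1[of "\<lambda>k. d (Suc k)" k] assms by simp
  then show ?thesis
    using Suc assms[of 0] by simp
qed (use assms[of 0] in simp)

lemma cf_real_bounds_second_one:
  assumes "\<And>k. 1 \<le> d k \<and> d k \<le> 2" and "d 1 = 1" and "n \<ge> 2"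
  shows "real (d 0) + 1/2 \<le> cf_real d n \<and> cf_real d n \<le> real (d 0) + 3/4"
proof -
  obtain k where n: "n = Suc (Suc k)"
    using \<open>n \<ge> 2\<close> by (metis add_2_eq_Suc le_Suc_ex)
  define t where "t = cf_real (\<lambda>j. d (Suc (Suc j))) k"
  have "1 \<le> t" "t \<le> 3"
    unfolding t_def using assms(1) by (auto intro: cf_real_ge_1 cf_real_le_3)
  then have "1/2 \<le> t / (t + 1)" "t / (t + 1) \<le> 3/4"
    by (simp_all add: field_simps)
  moreover have "cf_real d n = real (d 0) + t / (t + 1)"
    using \<open>d 1 = 1\<close> \<open>1 \<le> t\<close> unfolding n t_def by (simp add: field_simps)
  ultimately show ?thesis
    by simp
qed

lemma cf_real_bounds_first_third_one:
  assumes "\<And>k. 1 \<le> d k \<and> d k \<le> 2" and "d 0 = 1" and "d 2 = 1" and "n \<ge> 3"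
  shows "15/11 \<le> cf_real d n \<and> cf_real d n \<le> 5/3"
proof -
  obtain k where n: "n = Suc k" "k \<ge> 2"
    using \<open>n \<ge> 3\<close> by (cases n) auto
  define y where "y = cf_real (\<lambda>j. d (Suc j)) k"
  have "real (d 1) + 1/2 \<le> y \<and> y \<le> real (d 1) + 3/4"
    using cf_real_bounds_second_one[of "\<lambda>j. d (Suc j)" k] assms n unfolding y_def
    by (simp add: numeral_eq_Suc)
  moreover have "1 \<le> real (d 1)" "real (d 1) \<le> 2"
    using assms(1)[of 1] by auto
  ultimately have "3/2 \<le> y" "y \<le> 11/4"
    by auto
  then have "4/11 \<le> 1 / y" "1 / y \<le> 2/3"
    by (simp_all add: field_simps)
  moreover have "cf_real d n = 1 + 1 / y"
    using \<open>d 0 = 1\<close> unfolding n y_def by simp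
  ultimately show ?thesis
    by simp
qed

lemma cf_real_limit_eq:
  assumes pos: "\<And>k. k \<ge> 1 \<Longrightarrow> c k \<ge> 1" and "K \<ge> 1"
    and lim: "(\<lambda>n. cf_real c n) \<longlonglongrightarrow> \<gamma>"
    and r: "strict_mono r"
    and tail: "(\<lambda>n. cf_real (\<lambda>k. c (K + k)) (r n)) \<longlonglongrightarrow> \<alpha>" and "\<alpha> \<ge> 1"
  shows "\<gamma> = (\<alpha> * cf_num c (K + 1) + cf_num c K) / (\<alpha> * cf_den c (K + 1) + cf_den c K)"
proof -
  define M where "M x = (x * cf_num c (K + 1) + cf_num c K) / (x * cf_den c (K + 1) + cf_den c K)"
    for x :: real
  have "cf_den c (K + 1) \<ge> 1"
    using cf_den_ge_1[of c "K + 1", OF pos] \<open>K \<ge> 1\<close> by simp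
  then have "\<alpha> * cf_den c (K + 1) \<ge> 1 * 1"
    using \<open>\<alpha> \<ge> 1\<close> by (intro mult_mono) auto
  then have "\<alpha> * cf_den c (K + 1) + cf_den c K \<noteq> 0"
    using cf_den_nonneg[of c K] by linarith
  then have "(\<lambda>n. M (cf_real (\<lambda>k. c (K + k)) (r n))) \<longlonglongrightarrow> M \<alpha>"
    unfolding M_def using tail by (auto intro!: tendsto_intros)
  moreover have "M (cf_real (\<lambda>k. c (K + k)) (r n)) = cf_real c (K + r n)" for n
  proof -
    have "cf_real (\<lambda>k. c (K + k)) (r n) \<ge> 1"
      using pos \<open>K \<ge> 1\<close> by (intro cf_real_ge_1) simp
    then show ?thesis
      unfolding M_def cf_real_add by (intro cf_last_eq_num_den[symmetric]) simp
  qed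
  moreover have "strict_mono (\<lambda>n. K + r n)"
    using r by (simp add: strict_mono_def)
  then have "(\<lambda>n. cf_real c (K + r n)) \<longlonglongrightarrow> \<gamma>"
    using LIMSEQ_subseq_LIMSEQ[OF lim] by (simp add: comp_def)
  ultimately show ?thesis
    unfolding M_def by (simp add: LIMSEQ_unique)
qed

lemma cf_den_bracket:
  assumes pos: "\<And>k. k \<ge> 1 \<Longrightarrow> c k \<ge> 1" and "m \<ge> 1"
  obtains K where "K \<ge> 2" "cf_den c K \<le> int m" "int m < cf_den c (K + 1)"
proof -
  define N where "N = (LEAST n. int m < cf_den c n)"
  have "int m < cf_den c (m + 1 + 2)"
    using cf_den_ge[of c, OF pos, where n = "m + 1"] by simp
  then have N: "int m < cf_den c N"
    unfolding N_def by (rule LeastI)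
  have "cf_den c n \<le> int m" if "n \<le> 2" for n
    using that \<open>m \<ge> 1\<close> by (auto simp: le_Suc_eq numeral_eq_Suc cf_den.simps)
  then have "N \<ge> 3"
    using N by (metis not_less_eq_eq numeral_3_eq_3 numeral_2_eq_2 linorder_not_less)
  have "\<not> int m < cf_den c (N - 1)"
    unfolding N_def by (rule not_less_Least) (use \<open>N \<ge> 3\<close> N_def in simp)
  then show ?thesis
    using that[of "N - 1"] N \<open>N \<ge> 3\<close> by simp
qed

lemma scaled_convergent_eq_cf_real:
  assumes pos: "\<And>k. k \<ge> 1 \<Longrightarrow> c k \<ge> 1" and "j \<ge> 2"
    and "m = t * cf_den c j" "p = t * cf_num c j" "t \<noteq> 0"
  shows "real_of_int p / real_of_int m = cf_real c (j - 2)"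
proof -
  obtain i where j: "j = i + 2"
    using \<open>j \<ge> 2\<close> by (metis le_add_diff_inverse2)
  show ?thesis
    using assms(3-5) cf_real_eq_num_den[of c, OF pos, of i] unfolding j by simp
qed

lemma cf_den_le_2_mul:
  assumes pos: "\<And>k. k \<ge> 1 \<Longrightarrow> c k \<ge> 1" and "c k = 1" and "k \<ge> 1"
  shows "cf_den c (k + 2) \<le> 2 * cf_den c (k + 1)"
  using cf_den_rec[of c k] cf_den_mono[of c, OF pos \<open>k \<ge> 1\<close>] \<open>c k = 1\<close> by simp

lemma cf_den_four_le_three:
  assumes pos: "\<And>k. k \<ge> 1 \<Longrightarrow> c k \<ge> 1" and "c k \<le> 2" and "c (k + 1) = 1" and "k \<ge> 1"
  shows "4 * cf_den c (k + 2) \<le> 3 * cf_den c (k + 3)"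
proof -
  have "int (c k) * cf_den c (k + 1) \<le> 2 * cf_den c (k + 1)"
    using \<open>c k \<le> 2\<close> cf_den_nonneg[of c "k + 1"] by (intro mult_right_mono) auto
  then have "cf_den c (k + 2) \<le> 3 * cf_den c (k + 1)"
    using cf_den_rec[of c k] cf_den_mono[of c, OF pos \<open>k \<ge> 1\<close>] by simp
  moreover have "cf_den c (k + 3) = cf_den c (k + 2) + cf_den c (k + 1)"
    using cf_den_rec[of c "k + 1"] \<open>c (k + 1) = 1\<close> by (simp add: numeral_eq_Suc)
  ultimately show ?thesis
    by linarith
qed

section \<open>Coordinates with respect to consecutive convergents\<close>

lemma unimodular_coords:
  fixes P0 P1 Q0 Q1 D p m :: int
  assumes "P1 * Q0 - P0 * Q1 = D" and "D * D = 1"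
  obtains a b where "m = a * Q1 + b * Q0" and "p = a * P1 + b * P0"
proof
  have "(D * (p * Q0 - m * P0)) * Q1 + (D * (m * P1 - p * Q1)) * Q0 = D * m * (P1 * Q0 - P0 * Q1)"
    by (simp add: algebra_simps)
  then show "m = (D * (p * Q0 - m * P0)) * Q1 + (D * (m * P1 - p * Q1)) * Q0"
    using assms by (simp add: algebra_simps)
  have "(D * (p * Q0 - m * P0)) * P1 + (D * (m * P1 - p * Q1)) * P0 = D * p * (P1 * Q0 - P0 * Q1)"
    by (simp add: algebra_simps)
  then show "p = (D * (p * Q0 - m * P0)) * P1 + (D * (m * P1 - p * Q1)) * P0"
    using assms by (simp add: algebra_simps)
qed

lemma moebius_diff_coords:
  fixes P0 P1 Q0 Q1 D a b m p :: int and \<alpha> :: real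
  assumes "P1 * Q0 - P0 * Q1 = D" and "\<alpha> * Q1 + Q0 \<noteq> 0"
    and "m = a * Q1 + b * Q0" and "p = a * P1 + b * P0"
  shows "m * ((\<alpha> * P1 + P0) / (\<alpha> * Q1 + Q0)) - p = D * (b * \<alpha> - a) / (\<alpha> * Q1 + Q0)"
proof -
  have D: "real_of_int D = P1 * Q0 - P0 * Q1"
    using assms(1) by simp
  show ?thesis
    using assms(2-4) unfolding D by (simp add: field_simps)
qed

lemma coords_opposite_signs:
  fixes a b Q0 Q1 m :: int
  assumes "0 < Q0" "Q0 \<le> Q1" "0 \<le> m" "m < Q1" "m = a * Q1 + b * Q0" "a \<noteq> 0"
  shows "(a \<ge> 1 \<and> b \<le> -1) \<or> (a \<le> -1 \<and> b \<ge> 1)"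
proof (cases "a \<ge> 1")
  case True
  then have "a * Q1 \<ge> Q1"
    using assms by (simp add: mult_le_cancel_right1)
  then have "b * Q0 < 0"
    using assms by linarith
  then show ?thesis
    using True \<open>0 < Q0\<close> by (simp add: mult_less_0_iff)
next
  case False
  then have "a \<le> -1"
    using \<open>a \<noteq> 0\<close> by simp
  then have "a * Q1 \<le> (-1) * Q1"
    using assms by (intro mult_right_mono) auto
  then have "b * Q0 > 0"
    using assms by linarith
  then show ?thesis
    using False assms by (simp add: zero_less_mult_iff)
qed

lemma coords_frac_bound_even:
  fixes a b Q0 Q1 m :: int and \<alpha> f :: real
  assumes "\<alpha> > 1" "1 \<le> Q0" "Q0 \<le> m" "m < Q1" "m = a * Q1 + b * Q0" "a \<noteq> 0"
    and f: "f = (b * \<alpha> - a) / (\<alpha> * Q1 + Q0)" "f \<ge> 0"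
  shows "m * f > 1"
proof -
  define E where "E = \<alpha> * Q1 + Q0"
  have "\<alpha> * Q1 \<ge> 1 * 1"
    using assms by (intro mult_mono) auto
  then have "E > 0"
    unfolding E_def using assms by linarith
  have "a \<le> -1 \<and> b \<ge> 1"
  proof (rule ccontr)
    assume "\<not> (a \<le> -1 \<and> b \<ge> 1)"
    then have "a \<ge> 1" "b \<le> -1"
      using coords_opposite_signs[of Q0 Q1 m a b] assms by auto
    then have "b * \<alpha> \<le> 0"
      using \<open>\<alpha> > 1\<close> by (simp add: mult_nonpos_nonneg)
    then have "b * \<alpha> - a < 0"
      using \<open>a \<ge> 1\<close> by linarith
    then have "f < 0"
      using f(1) \<open>E > 0\<close> unfolding E_def by (simp add: divide_neg_pos)
    then show False
      using f(2) by simp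
  qed
  then have "m * b \<ge> b * Q0"
    using assms by (simp add: mult_right_mono)
  moreover have "b * Q0 \<ge> m + Q1"
  proof -
    have "a * Q1 \<le> (-1) * Q1"
      using \<open>a \<le> -1 \<and> b \<ge> 1\<close> assms by (intro mult_right_mono) auto
    then show ?thesis
      using assms by linarith
  qed
  ultimately have "real_of_int (m * b) \<ge> Q0 + Q1"
    using assms by linarith
  have "real_of_int m * a \<le> 0"
    using \<open>a \<le> -1 \<and> b \<ge> 1\<close> \<open>1 \<le> Q0\<close> \<open>Q0 \<le> m\<close> by (simp add: mult_nonneg_nonpos)
  have "E < (Q0 + Q1) * \<alpha>"
    unfolding E_def using assms by (simp add: algebra_simps)
  also have "\<dots> \<le> m * b * \<alpha>"
    using \<open>real_of_int (m * b) \<ge> Q0 + Q1\<close> assms by (intro mult_right_mono) auto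
  also have "\<dots> \<le> m * (b * \<alpha> - a)"
    using \<open>real_of_int m * a \<le> 0\<close> by (simp add: algebra_simps)
  finally have "m * (b * \<alpha> - a) / E > 1"
    using \<open>E > 0\<close> by simp
  then show ?thesis
    using f(1) unfolding E_def by simp
qed

lemma coords_odd_numerator_bound:
  fixes a b Q0 Qm m :: int and \<alpha> :: real
  assumes "\<alpha> \<ge> 1" "1 \<le> Q0" "0 \<le> Qm" "Qm \<le> Q0" "Q0 \<le> m" "m < Q0 + Qm"
    and m: "m = a * (Q0 + Qm) + b * Q0" and "a \<ge> 2"
  shows "\<alpha> * (Q0 + Qm) + Q0 < m * (a - b * \<alpha>)"
proof -
  have "(a - 1) * Q0 \<le> (a - 1) * (Q0 + Qm)"
    using assms by (intro mult_left_mono) auto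
  also have "\<dots> < (- b) * Q0"
    using m \<open>m < Q0 + Qm\<close> by (simp add: algebra_simps)
  finally have "a - 1 < - b"
    using \<open>1 \<le> Q0\<close> mult_less_cancel_right[of "a - 1" Q0 "- b"] by linarith
  then have "(- b) * \<alpha> \<ge> 2 * \<alpha>"
    using \<open>a \<ge> 2\<close> \<open>\<alpha> \<ge> 1\<close> by (intro mult_right_mono) auto
  then have "2 + 2 * \<alpha> \<le> a - b * \<alpha>"
    using \<open>a \<ge> 2\<close> by simp
  have "\<alpha> * Qm \<le> \<alpha> * Q0"
    using assms by (intro mult_left_mono) auto
  moreover have "Q0 * (2 + 2 * \<alpha>) = 2 * Q0 + 2 * (\<alpha> * Q0)"
    by (simp add: algebra_simps)
  ultimately have "\<alpha> * (Q0 + Qm) + Q0 < Q0 * (2 + 2 * \<alpha>)"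
    using \<open>1 \<le> Q0\<close> by (simp add: distrib_left)
  also have "\<dots> \<le> m * (a - b * \<alpha>)"
    using \<open>2 + 2 * \<alpha> \<le> a - b * \<alpha>\<close> \<open>1 \<le> Q0\<close> \<open>Q0 \<le> m\<close> \<open>\<alpha> \<ge> 1\<close>
    by (intro mult_mono) auto
  finally show ?thesis .
qed

lemma coords_frac_bound_odd:
  fixes a b Q0 Qm m :: int and \<alpha> f :: real
  assumes "\<alpha> \<ge> 1" "1 \<le> Q0" "0 \<le> Qm" "Qm \<le> Q0" "Q0 \<le> m" "m < Q0 + Qm"
    and m: "m = a * (Q0 + Qm) + b * Q0" and "a \<noteq> 0"
    and f: "f = (a - b * \<alpha>) / (\<alpha> * (Q0 + Qm) + Q0)" "f \<ge> 0"
  shows "m * f > 1 \<or> (a = 1 \<and> b = -1)"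
proof -
  define E where "E = \<alpha> * (Q0 + Qm) + Q0"
  have "\<alpha> * (Q0 + Qm) \<ge> 0"
    using assms by simp
  then have "E > 0"
    unfolding E_def using assms by linarith
  have "a \<ge> 1 \<and> b \<le> -1"
  proof (rule ccontr)
    assume "\<not> (a \<ge> 1 \<and> b \<le> -1)"
    then have "a \<le> -1" "b \<ge> 1"
      using coords_opposite_signs[of Q0 "Q0 + Qm" m a b] assms by auto
    then have "b * \<alpha> \<ge> 1 * 1"
      using \<open>\<alpha> \<ge> 1\<close> by (intro mult_mono) auto
    then have "f < 0"
      using f(1) \<open>E > 0\<close> \<open>a \<le> -1\<close> unfolding E_def by (simp add: divide_neg_pos)
    then show False
      using f(2) by simp
  qed
  show ?thesis
  proof (cases "a = 1")
    case True
    then have "- b * Q0 \<le> 1 * Q0"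
      using m assms by simp
    then have "b = -1"
      using \<open>a \<ge> 1 \<and> b \<le> -1\<close> \<open>1 \<le> Q0\<close> by (simp only: mult_le_cancel_right) simp
    then show ?thesis
      using True by simp
  next
    case False
    then have "a \<ge> 2"
      using \<open>a \<ge> 1 \<and> b \<le> -1\<close> by simp
    have "E < m * (a - b * \<alpha>)"
      unfolding E_def using assms(1-6) m \<open>a \<ge> 2\<close> by (rule coords_odd_numerator_bound)
    then have "m * (a - b * \<alpha>) / E > 1"
      using \<open>E > 0\<close> by simp
    then show ?thesis
      using f(1) unfolding E_def by simp
  qed
qed

section \<open>Bounds on the tangent\<close>

lemma x_le_tan:
  fixes x :: real
  assumes "0 \<le> x" "x < pi/2"
  shows "x \<le> tan x"
proof (cases "x = 0")
  case False
  then have "0 < x"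
    using assms by simp
  have deriv: "DERIV tan z :> inverse ((cos z)\<^sup>2)" if "0 \<le> z" "z \<le> x" for z
  proof -
    have "cos z > 0"
      using that assms by (intro cos_gt_zero_pi) auto
    then show ?thesis
      by (intro DERIV_tan) simp
  qed
  obtain z where z: "0 < z" "z < x" "tan x - tan 0 = (x - 0) * inverse ((cos z)\<^sup>2)"
    using MVT2[of 0 x tan, OF \<open>0 < x\<close> deriv] by blast
  have "cos z > 0"
    using z assms by (intro cos_gt_zero_pi) auto
  moreover have "(cos z)\<^sup>2 \<le> 1"
    by (simp add: abs_square_le_1)
  ultimately have "inverse ((cos z)\<^sup>2) \<ge> 1"
    by (simp add: one_le_inverse)
  then show ?thesis
    using z \<open>0 < x\<close> by (simp add: mult_le_cancel_left1)
qed simp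

lemma one_minus_sq_half_le_cos:
  fixes x :: real
  shows "1 - x\<^sup>2 / 2 \<le> cos x"
proof -
  have "sin (x / 2) ^ 2 \<le> (x / 2) ^ 2"
    using abs_sin_x_le_abs_x[of "x / 2"] by (metis abs_le_square_iff)
  then show ?thesis
    using cos_double_sin[of "x / 2"] by (simp add: power_divide)
qed

lemma tan_le_div_one_minus_sq_half:
  fixes x :: real
  assumes "0 \<le> x" "x \<le> 1"
  shows "tan x \<le> x / (1 - x\<^sup>2 / 2)"
proof -
  have "x\<^sup>2 \<le> 1"
    using assms by (simp add: power_le_one)
  then have pos: "0 < 1 - x\<^sup>2 / 2"
    by simp
  then have "0 < cos x"
    using one_minus_sq_half_le_cos[of x] by linarith
  then have "tan x \<le> x / cos x"
    using sin_x_le_x[OF assms(1)] by (simp add: tan_def divide_right_mono)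
  also have "\<dots> \<le> x / (1 - x\<^sup>2 / 2)"
    using one_minus_sq_half_le_cos[of x] pos assms(1) by (intro divide_left_mono) auto
  finally show ?thesis .
qed

lemma scaled_tan_ge:
  fixes m f :: real
  assumes "0 \<le> f" "f < 1" "0 \<le> m"
  shows "m * f \<le> 2/pi * m * tan (pi/2 * f)"
proof -
  have "pi/2 * f \<le> tan (pi/2 * f)"
    using assms by (intro x_le_tan) auto
  then have "2/pi * m * (pi/2 * f) \<le> 2/pi * m * tan (pi/2 * f)"
    using assms by (intro mult_left_mono) auto
  then show ?thesis
    by simp
qed

lemma scaled_tan_lt_2_minus_sqrt_3:
  fixes m f :: real
  assumes "0 \<le> f" and "2 \<le> m" and "m * f \<le> 10/31"
  shows "2/pi * m * tan (pi/2 * f) < 4/pi * (2 - sqrt 3)"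
proof -
  define x where "x = pi/2 * f"
  have "2 * f \<le> m * f"
    using assms by (intro mult_right_mono) auto
  then have "f \<le> 5/31"
    using assms by linarith
  have pi: "pi \<le> 3.1416"
    using pi_approx by simp
  have "0 \<le> x"
    unfolding x_def using assms by simp
  have "x \<le> 3.1416/2 * (5/31)"
    unfolding x_def using pi \<open>f \<le> 5/31\<close> assms by (intro mult_mono) auto
  then have "x \<le> 0.254"
    by simp
  then have "x\<^sup>2 \<le> 0.254\<^sup>2"
    using \<open>0 \<le> x\<close> by (intro power_mono) auto
  then have den: "1 - x\<^sup>2 / 2 \<ge> 0.9677"
    by (simp add: power2_eq_square)
  have "2/pi * m * tan x \<le> 2/pi * m * (x / (1 - x\<^sup>2 / 2))"
    using tan_le_div_one_minus_sq_half[of x] \<open>0 \<le> x\<close> \<open>x \<le> 0.254\<close> assms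
    by (intro mult_left_mono) auto
  also have "\<dots> = (2/pi * m * x) / (1 - x\<^sup>2 / 2)"
    by simp
  also have "2/pi * m * x = m * f"
    unfolding x_def by simp
  also have "m * f / (1 - x\<^sup>2 / 2) \<le> (10/31) / 0.9677"
    using assms den by (intro frac_le) auto
  also have "\<dots> < 4/3.1416 * (2 - 1.7321)"
    by simp
  also have "\<dots> \<le> 4/pi * (2 - sqrt 3)"
  proof -
    have "sqrt 3 \<le> 1.7321"
      by (rule real_le_lsqrt) (auto simp: power2_eq_square)
    moreover have "4/3.1416 \<le> 4/pi"
      using pi by (intro divide_left_mono) auto
    ultimately show ?thesis
      by (intro mult_mono) auto
  qed
  finally show ?thesis
    unfolding x_def .
qed

section \<open>The continued fraction gamma\<close>

locale cf_gamma =
  fixes c :: "nat \<Rightarrow> nat" and \<gamma> :: real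
  assumes c_bounds: "\<And>k. k \<ge> 1 \<Longrightarrow> 1 \<le> c k \<and> c k \<le> 2"
    and c_even: "\<And>k. k \<ge> 1 \<Longrightarrow> c (2 * k) = 1"
    and c_1: "c 1 = 1"
    and cf_limit: "(\<lambda>n. cf_real c n) \<longlonglongrightarrow> \<gamma>"
begin

abbreviation P where "P \<equiv> cf_num c"
abbreviation Q where "Q \<equiv> cf_den c"

lemma c_pos: "k \<ge> 1 \<Longrightarrow> c k \<ge> 1"
  using c_bounds by blast

(* The tails [c K; c (K + 1), ...] are not shown to converge; a convergent subsequence suffices,
   since gamma depends continuously on the tail value. *)
lemma complete_quotient:
  assumes "K \<ge> 1"
  obtains \<alpha> :: real where "\<gamma> = (\<alpha> * P (K + 1) + P K) / (\<alpha> * Q (K + 1) + Q K)" and "1 \<le> \<alpha>"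
    and "even K \<Longrightarrow> 15/11 \<le> \<alpha> \<and> \<alpha> \<le> 5/3"
proof -
  define t where "t n = cf_real (\<lambda>k. c (K + k)) n" for n
  have tail_bounds: "\<And>k. 1 \<le> c (K + k) \<and> c (K + k) \<le> 2"
    using c_bounds \<open>K \<ge> 1\<close> by simp
  then have t_bounds: "1 \<le> t n \<and> t n \<le> 3" for n
    unfolding t_def by (auto intro: cf_real_ge_1 cf_real_le_3)
  have "bounded (range t)"
  proof (rule boundedI)
    fix x assume "x \<in> range t"
    then obtain n where "x = t n"
      by blast
    then show "norm x \<le> 3"
      using t_bounds[of n] by simp
  qed
  then obtain \<alpha> r where r: "strict_mono r" and lim: "(t \<circ> r) \<longlonglongrightarrow> \<alpha>"
    using bounded_imp_convergent_subsequence by blast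
  have "1 \<le> \<alpha>"
    by (rule LIMSEQ_le_const[OF lim]) (use t_bounds in auto)
  moreover have "15/11 \<le> \<alpha> \<and> \<alpha> \<le> 5/3" if "even K"
  proof -
    obtain j where "K = 2 * j" "j \<ge> 1"
      using \<open>even K\<close> \<open>K \<ge> 1\<close> by (auto elim!: evenE)
    then have "c (K + 0) = 1" "c (K + 2) = 1"
      using c_even[of j] c_even[of "j + 1"] by (simp_all add: algebra_simps)
    then have "15/11 \<le> t n \<and> t n \<le> 5/3" if "n \<ge> 3" for n
      unfolding t_def using cf_real_bounds_first_third_one[OF tail_bounds _ _ that] by simp
    then have "\<forall>n\<ge>3. 15/11 \<le> (t \<circ> r) n \<and> (t \<circ> r) n \<le> 5/3"
      using seq_suble[OF r] by (metis comp_apply order.trans)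
    then show ?thesis
      using LIMSEQ_le_const[OF lim, of "15/11"] LIMSEQ_le_const2[OF lim, of "5/3"] by blast
  qed
  moreover have "\<gamma> = (\<alpha> * P (K + 1) + P K) / (\<alpha> * Q (K + 1) + Q K)"
    using cf_real_limit_eq[OF c_pos \<open>K \<ge> 1\<close> cf_limit r] lim \<open>1 \<le> \<alpha>\<close>
    unfolding t_def comp_def by blast
  ultimately show ?thesis
    using that by blast
qed

lemma odd_index_recurrences:
  assumes "j \<ge> 1"
  shows "Q (2 * j + 2) = Q (2 * j + 1) + Q (2 * j)" and "P (2 * j + 2) = P (2 * j + 1) + P (2 * j)"
    and "Q (2 * j) \<le> Q (2 * j + 1)"
  using cf_den_rec[of c "2 * j"] cf_num_rec[of c "2 * j"] c_even[OF assms]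
    cf_den_mono[of c "2 * j", OF c_pos] assms
  by simp_all

lemma floor_ratio_eq_convergent:
  assumes "j \<ge> 2" "t \<noteq> 0" "int m = t * Q j" "\<lfloor>real m * \<gamma>\<rfloor> = t * P j"
  shows "real_of_int \<lfloor>real m * \<gamma>\<rfloor> / real m = cf_real c (j - 2)"
  using scaled_convergent_eq_cf_real[of c, OF c_pos assms(1,3,4,2)] by simp

lemma frac_in_convergent_coords:
  assumes "m \<ge> 1"
  obtains K :: nat and \<alpha> :: real and a b :: int where "K \<ge> 2" "Q K \<le> int m" "int m < Q (K + 1)"
    and "1 \<le> \<alpha>" "even K \<Longrightarrow> 15/11 \<le> \<alpha>"
    and "int m = a * Q (K + 1) + b * Q K" "\<lfloor>real m * \<gamma>\<rfloor> = a * P (K + 1) + b * P K"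
    and "frac (real m * \<gamma>) = (-1) ^ K * (b * \<alpha> - a) / (\<alpha> * Q (K + 1) + Q K)"
proof -
  obtain K where K: "K \<ge> 2" "Q K \<le> int m" "int m < Q (K + 1)"
    using cf_den_bracket[of c, OF c_pos \<open>m \<ge> 1\<close>] by blast
  obtain \<alpha> :: real where \<gamma>: "\<gamma> = (\<alpha> * P (K + 1) + P K) / (\<alpha> * Q (K + 1) + Q K)"
    and "1 \<le> \<alpha>" and "even K \<Longrightarrow> 15/11 \<le> \<alpha> \<and> \<alpha> \<le> 5/3"
    using complete_quotient[of K] K by auto
  define p where "p = \<lfloor>real m * \<gamma>\<rfloor>"
  have det: "P (K + 1) * Q K - P K * Q (K + 1) = (-1) ^ K"
    by (rule cf_num_den_det)
  have "(-1 :: int) ^ K * (-1) ^ K = 1"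
    by (simp flip: power_mult_distrib)
  then obtain a b where m: "int m = a * Q (K + 1) + b * Q K" and p: "p = a * P (K + 1) + b * P K"
    using unimodular_coords[OF det, of "int m" p] by blast
  have "\<alpha> * Q (K + 1) \<ge> 1 * 1"
    using K \<open>1 \<le> \<alpha>\<close> by (intro mult_mono) auto
  then have "\<alpha> * Q (K + 1) + Q K \<noteq> 0"
    using cf_den_nonneg[of c K] by linarith
  note diff = moebius_diff_coords[OF det this m p]
  have "frac (real m * \<gamma>) = real m * \<gamma> - p"
    unfolding frac_def p_def ..
  then have "frac (real m * \<gamma>) = (-1) ^ K * (b * \<alpha> - a) / (\<alpha> * Q (K + 1) + Q K)"
    using diff unfolding \<gamma> by simp
  moreover have "\<lfloor>real m * \<gamma>\<rfloor> = a * P (K + 1) + b * P K"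
    using p unfolding p_def .
  ultimately show ?thesis
    using \<open>even K \<Longrightarrow> 15/11 \<le> \<alpha> \<and> \<alpha> \<le> 5/3\<close>
    by (intro that[OF K \<open>1 \<le> \<alpha>\<close> _ m]) simp_all
qed

lemma frac_bound_non_convergent:
  assumes "m \<ge> 1" and not_conv: "\<And>k. real_of_int \<lfloor>real m * \<gamma>\<rfloor> / real m \<noteq> cf_real c k"
  shows "real m * frac (real m * \<gamma>) > 1"
proof (rule frac_in_convergent_coords[OF \<open>m \<ge> 1\<close>])
  fix K :: nat and \<alpha> :: real and a b :: int
  assume K: "K \<ge> 2" "Q K \<le> int m" "int m < Q (K + 1)"
    and "1 \<le> \<alpha>" and \<alpha>_even: "even K \<Longrightarrow> 15/11 \<le> \<alpha>"
    and m: "int m = a * Q (K + 1) + b * Q K" and p: "\<lfloor>real m * \<gamma>\<rfloor> = a * P (K + 1) + b * P K"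
    and frac: "frac (real m * \<gamma>) = (-1) ^ K * (b * \<alpha> - a) / (\<alpha> * Q (K + 1) + Q K)"
  have "Q K \<ge> 1"
    using cf_den_ge_1[of c K, OF c_pos] K by simp
  have "a \<noteq> 0"
  proof
    assume "a = 0"
    then have "int m = b * Q K" "\<lfloor>real m * \<gamma>\<rfloor> = b * P K"
      using m p by simp_all
    moreover from this(1) have "b \<noteq> 0"
      using \<open>m \<ge> 1\<close> by (intro notI) simp
    ultimately show False
      using floor_ratio_eq_convergent[OF \<open>K \<ge> 2\<close>] not_conv by blast
  qed
  show ?thesis
  proof (cases "even K")
    case True
    then show ?thesis
      using coords_frac_bound_even[OF _ \<open>Q K \<ge> 1\<close> K(2,3) m \<open>a \<noteq> 0\<close> _ frac_ge_0] \<alpha>_even frac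
      by simp
  next
    case False
    then obtain j where "K = 2 * j + 1"
      by (rule oddE)
    with K have j: "K = 2 * j + 1" "j \<ge> 1"
      by simp_all
    then have Q1: "Q (K + 1) = Q K + Q (2 * j)" and P1: "P (K + 1) = P K + P (2 * j)"
      and "Q (2 * j) \<le> Q K"
      using odd_index_recurrences[OF \<open>j \<ge> 1\<close>] by (simp_all add: add.assoc)
    have "frac (real m * \<gamma>) = (a - b * \<alpha>) / (\<alpha> * (Q K + Q (2 * j)) + Q K)"
      using frac False Q1 by (simp add: algebra_simps)
    from coords_frac_bound_odd[OF \<open>1 \<le> \<alpha>\<close> \<open>Q K \<ge> 1\<close> cf_den_nonneg \<open>Q (2 * j) \<le> Q K\<close> K(2)
        K(3)[unfolded Q1] m[unfolded Q1] \<open>a \<noteq> 0\<close> this frac_ge_0]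
    consider "real m * frac (real m * \<gamma>) > 1" | "a = 1" "b = -1"
      by auto
    then show ?thesis
    proof cases
      case 2
      then have "int m = 1 * Q (2 * j) \<and> \<lfloor>real m * \<gamma>\<rfloor> = 1 * P (2 * j)"
        using m p unfolding Q1 P1 by simp
      then have "real_of_int \<lfloor>real m * \<gamma>\<rfloor> / real m = cf_real c (2 * j - 2)"
        using j by (intro floor_ratio_eq_convergent[where t = 1]) simp_all
      then show ?thesis
        using not_conv by blast
    qed
  qed
qed

lemma convergent_frac:
  assumes "\<lfloor>real m * \<gamma>\<rfloor> = P (2 * n + 2)" and "int m = Q (2 * n + 2)"
  obtains \<alpha> :: real where "15/11 \<le> \<alpha>" "\<alpha> \<le> 5/3"
    "real m * frac (real m * \<gamma>) = \<alpha> * Q (2 * n + 2) / (\<alpha> * Q (2 * n + 3) + Q (2 * n + 2))"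
proof -
  define K where "K = 2 * n + 2"
  have pK: "\<lfloor>real m * \<gamma>\<rfloor> = P K" and mK: "int m = Q K"
    using assms unfolding K_def by simp_all
  obtain \<alpha> :: real where \<gamma>: "\<gamma> = (\<alpha> * P (K + 1) + P K) / (\<alpha> * Q (K + 1) + Q K)"
    and \<alpha>: "15/11 \<le> \<alpha>" "\<alpha> \<le> 5/3"
    using complete_quotient[of K] unfolding K_def by auto
  have det: "P (K + 1) * Q K - P K * Q (K + 1) = 1"
    using cf_num_den_det[of c K] unfolding K_def by simp
  have "\<alpha> * Q (K + 1) \<ge> 0"
    using \<alpha> cf_den_nonneg[of c "K + 1"] by simp
  then have E: "\<alpha> * Q (K + 1) + Q K \<noteq> 0"
    using cf_den_ge_1[of c K, OF c_pos] unfolding K_def by linarith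
  have rm: "real m = Q K"
    using mK by (metis of_int_of_nat_eq)
  have "real m * ((\<alpha> * P (K + 1) + P K) / (\<alpha> * Q (K + 1) + Q K)) - P K
      = \<alpha> / (\<alpha> * Q (K + 1) + Q K)"
    using moebius_diff_coords[OF det E, of "Q K" 0 1 "P K"] unfolding rm by simp
  moreover have "frac (real m * \<gamma>) = real m * \<gamma> - P K"
    unfolding frac_def pK ..
  ultimately have "frac (real m * \<gamma>) = \<alpha> / (\<alpha> * Q (K + 1) + Q K)"
    unfolding \<gamma> by simp
  then have "real m * frac (real m * \<gamma>) = \<alpha> * Q K / (\<alpha> * Q (K + 1) + Q K)"
    unfolding rm by simp
  moreover have "K + 1 = 2 * n + 3"
    unfolding K_def by simp
  ultimately show ?thesis
    using that[OF \<alpha>] unfolding K_def by metis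
qed

lemma convergent_frac_gt_2_5:
  assumes "\<lfloor>real m * \<gamma>\<rfloor> = P (2 * n + 2)" and "int m = Q (2 * n + 2)" and "c (2 * n + 1) = 1"
  shows "real m * frac (real m * \<gamma>) > 2/5"
proof -
  define Q0 Q1 Qm where "Q0 = Q (2 * n + 2)" "Q1 = Q (2 * n + 3)" "Qm = Q (2 * n + 1)"
  obtain \<alpha> :: real where \<alpha>: "15/11 \<le> \<alpha>" "\<alpha> \<le> 5/3"
    and frac: "real m * frac (real m * \<gamma>) = \<alpha> * Q0 / (\<alpha> * Q1 + Q0)"
    using convergent_frac[OF assms(1,2)] unfolding Q0_Q1_Qm_def by blast
  have "4 * Qm \<le> 3 * Q0"
  proof (cases n)
    case (Suc i)
    have "c (2 * i + 1 + 1) = 1"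
      using c_even[of "i + 1"] by simp
    then have "4 * Q (2 * i + 1 + 2) \<le> 3 * Q (2 * i + 1 + 3)"
      using c_bounds[of "2 * i + 1"] by (intro cf_den_four_le_three[of c, OF c_pos]) auto
    then show ?thesis
      unfolding Q0_Q1_Qm_def Suc by (simp add: numeral_eq_Suc)
  qed (simp add: Q0_Q1_Qm_def cf_den_nonneg)
  then have "\<alpha> * Qm \<le> \<alpha> * (3/4 * Q0)"
    using \<alpha> by (intro mult_left_mono) auto
  then have "\<alpha> * Qm \<le> 3/4 * (\<alpha> * Q0)"
    by (simp only: mult.left_commute)
  moreover have "Q1 = Q0 + Qm"
    using cf_den_rec[of c "2 * n + 1"] \<open>c (2 * n + 1) = 1\<close> unfolding Q0_Q1_Qm_def
    by (simp add: numeral_eq_Suc)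
  then have "\<alpha> * Q1 + Q0 = \<alpha> * Q0 + \<alpha> * Qm + Q0"
    by (simp add: algebra_simps)
  moreover have "real_of_int Q0 \<ge> 1"
    using cf_den_ge_1[of c "2 * n + 2", OF c_pos] unfolding Q0_Q1_Qm_def by (simp del: cf_den.simps)
  moreover have "\<alpha> * Q0 \<ge> 15/11 * Q0"
    using \<alpha> \<open>real_of_int Q0 \<ge> 1\<close> by (intro mult_right_mono) auto
  ultimately have "2 * (\<alpha> * Qm) + 2 * Q0 < 3 * (\<alpha> * Q0)" "\<alpha> * Q1 + Q0 = \<alpha> * Q0 + \<alpha> * Qm + Q0"
    by linarith+
  then have "2 * (\<alpha> * Q1 + Q0) < 5 * (\<alpha> * Q0)"
    by simp
  moreover have "\<alpha> * Q1 \<ge> 0"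
    using \<alpha> cf_den_nonneg[of c "2 * n + 3"] unfolding Q0_Q1_Qm_def by simp
  then have "\<alpha> * Q1 + Q0 > 0"
    using \<open>real_of_int Q0 \<ge> 1\<close> by linarith
  ultimately show ?thesis
    unfolding frac by (simp add: field_simps)
qed

lemma convergent_frac_le_10_31:
  assumes "\<lfloor>real m * \<gamma>\<rfloor> = P (2 * n + 2)" and "int m = Q (2 * n + 2)" and "c (2 * n + 1) = 2"
  shows "real m * frac (real m * \<gamma>) \<le> 10/31"
proof -
  define Q0 Q1 Qm where "Q0 = Q (2 * n + 2)" "Q1 = Q (2 * n + 3)" "Qm = Q (2 * n + 1)"
  obtain \<alpha> :: real where \<alpha>: "15/11 \<le> \<alpha>" "\<alpha> \<le> 5/3"
    and frac: "real m * frac (real m * \<gamma>) = \<alpha> * Q0 / (\<alpha> * Q1 + Q0)"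
    using convergent_frac[OF assms(1,2)] unfolding Q0_Q1_Qm_def by blast
  have "n \<ge> 1"
    using assms(3) c_1 by (cases n) auto
  then have "Q0 \<le> 2 * Qm"
    using cf_den_le_2_mul[of c "2 * n", OF c_pos c_even] unfolding Q0_Q1_Qm_def by simp
  then have "\<alpha> * Q0 \<le> \<alpha> * (2 * Qm)"
    using \<alpha> by (intro mult_left_mono) auto
  then have "\<alpha> * Q0 \<le> 2 * (\<alpha> * Qm)"
    by (simp only: mult.left_commute)
  moreover have "Q1 = 2 * Q0 + Qm"
    using cf_den_rec[of c "2 * n + 1"] assms(3) unfolding Q0_Q1_Qm_def by (simp add: numeral_eq_Suc)
  then have "\<alpha> * Q1 + Q0 = 2 * (\<alpha> * Q0) + \<alpha> * Qm + Q0"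
    by (simp add: algebra_simps)
  moreover have "real_of_int Q0 \<ge> 1"
    using cf_den_ge_1[of c "2 * n + 2", OF c_pos] unfolding Q0_Q1_Qm_def by simp
  moreover have "\<alpha> * Q0 \<le> 5/3 * Q0"
    using \<alpha> \<open>real_of_int Q0 \<ge> 1\<close> by (intro mult_right_mono) auto
  moreover have "\<alpha> * Q0 \<ge> 0"
    using \<alpha> \<open>real_of_int Q0 \<ge> 1\<close> by simp
  ultimately have "31 * (\<alpha> * Q0) \<le> 10 * (\<alpha> * Q1) + 10 * Q0" "\<alpha> * Q1 + Q0 > 0"
    by linarith+
  then show ?thesis
    unfolding frac by (simp add: field_simps)
qed

lemma convergent_den_ge_2:
  assumes "int m = Q (2 * n + 2)" and "c (2 * n + 1) = 2"
  shows "m \<ge> 2"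
proof -
  have "n \<ge> 1"
    using assms(2) c_1 by (cases n) auto
  then show ?thesis
    using cf_den_ge[of c, OF c_pos, of "2 * n"] assms(1) by simp
qed

end

lemma cf_gammaI:
  assumes "c 1 = 1" and "\<forall>n\<ge>1. c (2 * n) = 1" and "\<forall>n\<ge>1. c (2 * n + 1) \<in> {1, 2}"
    and "(\<lambda>n. real_of_rat (cf c n)) \<longlonglongrightarrow> \<gamma>"
  shows "cf_gamma c \<gamma>"
proof
  fix k :: nat
  assume "k \<ge> 1"
  show "1 \<le> c k \<and> c k \<le> 2"
  proof (cases "even k")
    case True
    then obtain j where "k = 2 * j"
      by (rule evenE)
    then show ?thesis
      using assms(2)[rule_format, of j] \<open>k \<ge> 1\<close> by simp
  next
    case False
    then obtain j where "k = 2 * j + 1"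
      by (rule oddE)
    show ?thesis
    proof (cases "j = 0")
      case False
      then have "c (2 * j + 1) \<in> {1, 2}"
        using assms(3)[rule_format, of j] by simp
      then show ?thesis
        using \<open>k = 2 * j + 1\<close> by auto
    qed (use assms(1) \<open>k = 2 * j + 1\<close> in simp)
  qed
next
  show "\<And>k. k \<ge> 1 \<Longrightarrow> c (2 * k) = 1" "c 1 = 1" "(\<lambda>n. cf_real c n) \<longlonglongrightarrow> \<gamma>"
    using assms by (simp_all add: of_rat_cf)
qed

theorem lemma5p3:
  fixes c :: "nat \<Rightarrow> nat" and \<gamma> :: real and m :: nat
  assumes c0: "c 0 = 0" and c1: "c 1 = 1"
    and ceven: "\<forall>n\<ge>1. c (2*n) = 1"
    and codd: "\<forall>n\<ge>1. c (2*n+1) \<in> {1, 2}"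
    and gamma: "(\<lambda>n. real_of_rat (cf c n)) \<longlonglongrightarrow> \<gamma>"
    and m: "m \<ge> 1"
  shows "((\<not> (\<exists>k. real_of_int \<lfloor>real m * \<gamma>\<rfloor> / real m = real_of_rat (cf c k)))
            \<longrightarrow> 2/pi * real m * tan (pi/2 * (real m * \<gamma> - real_of_int \<lfloor>real m * \<gamma>\<rfloor>)) > 1)
       \<and> (\<forall>n. \<lfloor>real m * \<gamma>\<rfloor> = conv_p c (2*n) \<and> int m = conv_q c (2*n) \<and> c (2*n+1) = 1
            \<longrightarrow> 2/pi * real m * tan (pi/2 * (real m * \<gamma> - real_of_int \<lfloor>real m * \<gamma>\<rfloor>)) > 2/5)
       \<and> (\<forall>n. \<lfloor>real m * \<gamma>\<rfloor> = conv_p c (2*n) \<and> int m = conv_q c (2*n) \<and> c (2*n+1) = 2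
            \<longrightarrow> 2/pi * real m * tan (pi/2 * (real m * \<gamma> - real_of_int \<lfloor>real m * \<gamma>\<rfloor>)) < 4/pi * (2 - sqrt 3))"
proof -
  interpret cf_gamma c \<gamma>
    using c1 ceven codd gamma by (rule cf_gammaI)
  define f where "f = frac (real m * \<gamma>)"
  have tan_ge: "real m * f \<le> 2/pi * real m * tan (pi/2 * f)"
    unfolding f_def by (intro scaled_tan_ge) (simp_all add: frac_lt_1)
  have conv: "conv_p c (2 * n) = P (2 * n + 2)" "conv_q c (2 * n) = Q (2 * n + 2)" for n
    using conv_p_conv_q[of c, OF c_pos] by simp_all
  show ?thesis
    unfolding frac_def[symmetric] f_def[symmetric]
  proof (intro conjI allI impI)
    assume "\<not> (\<exists>k. real_of_int \<lfloor>real m * \<gamma>\<rfloor> / real m = real_of_rat (cf c k))"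
    then have "real m * f > 1"
      unfolding f_def using m by (intro frac_bound_non_convergent) (auto simp: of_rat_cf)
    then show "2/pi * real m * tan (pi/2 * f) > 1"
      using tan_ge by linarith
  next
    fix n
    assume "\<lfloor>real m * \<gamma>\<rfloor> = conv_p c (2*n) \<and> int m = conv_q c (2*n) \<and> c (2*n+1) = 1"
    then have "real m * f > 2/5"
      unfolding f_def conv by (intro convergent_frac_gt_2_5) auto
    then show "2/pi * real m * tan (pi/2 * f) > 2/5"
      using tan_ge by linarith
  next
    fix n
    assume "\<lfloor>real m * \<gamma>\<rfloor> = conv_p c (2*n) \<and> int m = conv_q c (2*n) \<and> c (2*n+1) = 2"
    then have "real m * f \<le> 10/31" and "m \<ge> 2"
      unfolding f_def conv using convergent_frac_le_10_31 convergent_den_ge_2 by blast+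
    then show "2/pi * real m * tan (pi/2 * f) < 4/pi * (2 - sqrt 3)"
      unfolding f_def by (intro scaled_tan_lt_2_minus_sqrt_3) auto
  qed
qed

end
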